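(* Let $0<\delta\le1$, $1\le\alpha_n\le\log n$, let $\sigma(x)=1/(1+e^{-x})$ be the logistic squasher, let $m:\mathbb{R}^d\to\mathbb{R}$ be Lipschitz continuous with Lipschitz constant $C_{Lip}$, let $L,r,n\in\mathbb{N}$ with $L\ge2$, $r\ge2d$, $n\ge8d$, $n\ge\exp(r+1)$, and let $K,K_n\in\mathbb{N}$ with $K^d\le K_n$. Let $a_1,\dots,a_d,b_1,\dots,b_d\in[-\alpha_n,\alpha_n]$ with $b_i-a_i=\Delta$ for all $i\in\{1,\dots,d\}$, where $\Delta>0$. Then there exist $\alpha_1,\dots,\alpha_{K^d}\in[-\|m\|_\infty,\|m\|_\infty]$ and $u_1,v_1,\dots,u_{K^d},v_{K^d}\in[a_1,b_1)\times\dots\times[a_d,b_d)$ such that the following holds. For all pairwise distinct $j_1,\dots,j_{K^d}\in\{1,\dots,K_n\}$, every weight vector $\mathbf{w}$ satisfying, for all $k\in\{1,\dots,K^d\}$, $w^{(0)}_{j_k,j,j}=\frac{4d(\log n)^2}{\delta}$, $w^{(0)}_{j_k,j,0}=-\frac{4d(\log n)^2u_k^{(j)}}{\delta}$, $w^{(0)}_{j_k,j+d,j}=-\frac{4d(\log n)^2}{\delta}$, $w^{(0)}_{j_k,j+d,0}=\frac{4d(\log n)^2v_k^{(j)}}{\delta}$ for $j\in\{1,\dots,d\}$; $w^{(0)}_{j_k,s,t}=0$ if $s\le2d$, $s\ne t$, $s\ne t+d$, $t>0$; $w^{(1)}_{j_k,1,t}=8(\log n)^2$ for $t\in\{1,\dots,2d\}$,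 $w^{(1)}_{j_k,1,0}=-8(\log n)^2(2d-\frac12)$, $w^{(1)}_{j_k,1,t}=0$ for $t>2d$; $w^{(l)}_{j_k,1,1}=6(\log n)^2$, $w^{(l)}_{j_k,1,0}=-3(\log n)^2$ and $w^{(l)}_{j_k,1,t}=0$ for $t>1$, for $l\in\{2,\dots,L\}$; and every weight vector $\bar{\mathbf{w}}$ satisfying $\bar w^{(L)}_{1,1,j_k}=\alpha_k$ ($k\in\{1,\dots,K^d\}$), $\bar w^{(L)}_{1,1,k}=0$ ($k\notin\{j_1,\dots,j_{K^d}\}$) and $|w^{(l)}_{j_s,k,i}-\bar w^{(l)}_{j_s,k,i}|\le\log n$ for all $k,i$, $l\in\{0,\dots,L-1\}$, $s\in\{1,\dots,K^d\}$, we have \[ |f_{\bar{\mathbf{w}}}(x)-m(x)|\le c_{19}\Big(C_{Lip}\cdot\frac{\Delta}{K}+K^d\cdot\frac1n\Big) \] for all $x\in[a_1,b_1]\times\dots\times[a_d,b_d]$ which are not contained in \[ \bigcup_{j\in\{0,1,\dots,K\}}\bigcup_{i\in\{1,\dots,d\}}\Big\{x\in\mathbb{R}^d:\Big|x^{(i)}-\Big(a_i+j\cdot\frac{b_i-a_i}{K}\Big)\Big|<\delta\Big\}, \] where $c_{19}>0$ is a constant depending only on $d$ and $\|m\|_\infty$; and, if additionally $\delta\le\Delta/K$, then $|f_{\bar{\mathbf{w}}}(x)|\le\|m\|_\infty\cdot(3^d+K^d/n)$ for all $x\in\mathbb{R}^d$.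
   Context: For a weight vector $\bar{\mathbf{w}}=(\bar w^{(l)}_{k,i,j})$, $f_{\bar{\mathbf{w}}}(x)=\sum_{j=1}^{K_n}\bar w^{(L)}_{1,1,j}\bar f^{(L)}_{j,1}(x)$, where for $k\in\{1,\dots,K_n\}$, $i\in\{1,\dots,r\}$: $\bar f^{(l)}_{k,i}(x)=\sigma\big(\sum_{j=1}^r\bar w^{(l-1)}_{k,i,j}\bar f^{(l-1)}_{k,j}(x)+\bar w^{(l-1)}_{k,i,0}\big)$ for $l=2,\dots,L$ and $\bar f^{(1)}_{k,i}(x)=\sigma\big(\sum_{j=1}^d\bar w^{(0)}_{k,i,j}x^{(j)}+\bar w^{(0)}_{k,i,0}\big)$. $x^{(j)}$ and $u_k^{(j)}$ denote $j$-th components; $\|m\|_\infty=\sup_x|m(x)|$. *)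

theory Defs
  imports "HOL-Analysis.Analysis"
begin

definition sigma :: "real \<Rightarrow> real" where
  "sigma x = 1 / (1 + exp (- x))"

text \<open>Points of R^d are encoded as functions nat => real, with components
  x 1, ..., x d and all other entries equal to 0.\<close>
definition Rd :: "nat \<Rightarrow> (nat \<Rightarrow> real) set" where
  "Rd d = {x. \<forall>j. j \<notin> {1..d} \<longrightarrow> x j = 0}"

definition dist_d :: "nat \<Rightarrow> (nat \<Rightarrow> real) \<Rightarrow> (nat \<Rightarrow> real) \<Rightarrow> real" where
  "dist_d d x y = L2_set (\<lambda>j. x j - y j) {1..d}"

definition supnorm_d :: "nat \<Rightarrow> ((nat \<Rightarrow> real) \<Rightarrow> real) \<Rightarrow> real" where
  "supnorm_d d m = (SUP x\<in>Rd d. \<bar>m x\<bar>)"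

text \<open>Hidden neurons: weight vector w l k i j = w^{(l)}_{k,i,j}.
  fbar d r w l k i x = \bar f^{(l)}_{k,i}(x) for l >= 1.\<close>
fun fbar :: "nat \<Rightarrow> nat \<Rightarrow> (nat \<Rightarrow> nat \<Rightarrow> nat \<Rightarrow> nat \<Rightarrow> real) \<Rightarrow> nat \<Rightarrow> nat \<Rightarrow> nat
    \<Rightarrow> (nat \<Rightarrow> real) \<Rightarrow> real" where
  "fbar d r w 0 k i x = 0"
| "fbar d r w (Suc 0) k i x = sigma ((\<Sum>j=1..d. w 0 k i j * x j) + w 0 k i 0)"
| "fbar d r w (Suc (Suc l)) k i x =
     sigma ((\<Sum>j=1..r. w (Suc l) k i j * fbar d r w (Suc l) k j x) + w (Suc l) k i 0)"

definition net :: "nat \<Rightarrow> nat \<Rightarrow> nat \<Rightarrow> nat \<Rightarrow> (nat \<Rightarrow> nat \<Rightarrow> nat \<Rightarrow> nat \<Rightarrow> real)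
    \<Rightarrow> (nat \<Rightarrow> real) \<Rightarrow> real" where
  "net d r L Kn w x = (\<Sum>j=1..Kn. w L 1 1 j * fbar d r w L j 1 x)"

end

theory Submission
  imports Defs
begin

text \<open>
  Each of the K^d cells of the grid carries its own chain of neurons. The first layer computes 2d
  steep sigmoid ramps in x^(j) - u^(j) and v^(j) - x^(j), the second layer is an AND gate of these
  ramps and every further layer re-saturates its single input, so the chain outputs the indicator
  of the cell up to an error exp (- log n) = 1/n as long as x keeps distance \<delta> from the cell
  boundary. The ideal weights are of order (log n)^2 and each is perturbed by at most log n, so a
  pre-activation moves by at most (log n)^2, which the gates absorb. Only in the first layer does
  this noise grow with |x|; there a fixed-point estimate still shows that x lies near the cell
  whenever all ramps are open. With output weights m(u_k) the network is a piecewise constant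
  approximation of m: off the grid lines its error is the oscillation of m on one cell, at most
  C_Lip d \<Delta>/K, plus K^d ||m|| / n; and if \<delta> \<le> \<Delta>/K, every x lies near at most 3^d cells,
  which gives the global bound.
\<close>

type_synonym weights = "nat \<Rightarrow> nat \<Rightarrow> nat \<Rightarrow> nat \<Rightarrow> real"

lemma sigma_pos: "0 < sigma y"
  unfolding sigma_def by (simp add: add_pos_pos)

lemma sigma_less_one: "sigma y < 1"
  unfolding sigma_def by (simp add: add_pos_pos)

lemma sigma_le_exp: "sigma y \<le> exp y"
  unfolding sigma_def by (simp add: field_simps exp_minus add_pos_pos)

lemma one_minus_exp_neg_le_sigma: "1 - exp (- y) \<le> sigma y"
proof -
  have "(1 - exp (- y)) * (1 + exp (- y)) \<le> 1"
    by (simp add: algebra_simps)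
  then show ?thesis
    unfolding sigma_def by (simp add: le_divide_eq add_pos_pos)
qed

lemma sigma_ge_one_minus_exp_neg: "N \<le> y \<Longrightarrow> 1 - exp (- N) \<le> sigma y"
  using one_minus_exp_neg_le_sigma[of y] by (smt (verit) exp_le_cancel_iff)

lemma sigma_le_exp_neg: "y \<le> - N \<Longrightarrow> sigma y \<le> exp (- N)"
  using sigma_le_exp[of y] by (smt (verit) exp_le_cancel_iff)

lemma exp_neg_le_eighth: "3 \<le> N \<Longrightarrow> exp (- N) \<le> (1 / 8 :: real)"
proof -
  assume "3 \<le> N"
  have "8 \<le> 1 + 3 + (3::real)^2 / 2" by simp
  also have "\<dots> \<le> exp 3" by (rule exp_lower_Taylor_quadratic) simp
  also have "\<dots> \<le> exp N" using \<open>3 \<le> N\<close> by simp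
  finally show ?thesis by (simp add: exp_minus field_simps)
qed

lemma exp_neg_two_le_quarter: "exp (- 2) \<le> (1 / 4 :: real)"
proof -
  have "4 \<le> 1 + 2 + (2::real)^2 / 2" by simp
  also have "\<dots> \<le> exp 2" by (rule exp_lower_Taylor_quadratic) simp
  finally show ?thesis by (simp add: exp_minus field_simps)
qed

lemma neg_two_less_if_sigma_gt_quarter: "1 / 4 < sigma y \<Longrightarrow> - 2 < y"
  using sigma_le_exp_neg[of y 2] exp_neg_two_le_quarter by force

lemma fbar_pos_less_one: "1 \<le> p \<Longrightarrow> 0 < fbar d r w p k i x \<and> fbar d r w p k i x < 1"
  by (cases p; cases "p - 1") (auto simp: sigma_pos sigma_less_one)

lemma fbar_one: "fbar d r w 1 k i x = sigma ((\<Sum>j=1..d. w 0 k i j * x j) + w 0 k i 0)"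
  by (simp add: One_nat_def)

lemma fbar_Suc: "1 \<le> l \<Longrightarrow>
    fbar d r w (Suc l) k i x = sigma ((\<Sum>j=1..r. w l k i j * fbar d r w l k j x) + w l k i 0)"
  by (cases l) auto

lemma perturbed_affine_dist:
  fixes W V h :: "nat \<Rightarrow> real"
  assumes "finite A" and "\<forall>t\<in>A. \<bar>W t - V t\<bar> \<le> N" and "\<bar>W 0 - V 0\<bar> \<le> N"
  shows "\<bar>(\<Sum>t\<in>A. W t * h t) + W 0 - ((\<Sum>t\<in>A. V t * h t) + V 0)\<bar> \<le> N * ((\<Sum>t\<in>A. \<bar>h t\<bar>) + 1)"
proof -
  have "\<bar>(\<Sum>t\<in>A. W t * h t) + W 0 - ((\<Sum>t\<in>A. V t * h t) + V 0)\<bar>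
      = \<bar>(\<Sum>t\<in>A. (W t - V t) * h t) + (W 0 - V 0)\<bar>"
    by (simp add: sum_subtractf algebra_simps)
  also have "\<dots> \<le> (\<Sum>t\<in>A. \<bar>(W t - V t) * h t\<bar>) + \<bar>W 0 - V 0\<bar>"
    by (rule order_trans[OF abs_triangle_ineq add_mono[OF sum_abs order_refl]])
  also have "\<dots> = (\<Sum>t\<in>A. \<bar>W t - V t\<bar> * \<bar>h t\<bar>) + \<bar>W 0 - V 0\<bar>"
    by (simp add: abs_mult)
  also have "\<dots> \<le> (\<Sum>t\<in>A. N * \<bar>h t\<bar>) + N"
    using assms by (intro add_mono sum_mono mult_right_mono) auto
  finally show ?thesis
    by (simp add: sum_distrib_left algebra_simps)
qed

lemma perturbed_affine_dist_unit_inputs: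
  fixes W V h :: "nat \<Rightarrow> real"
  assumes "\<forall>t. \<bar>W t - V t\<bar> \<le> N" and "\<forall>t\<in>{1..r}. 0 \<le> h t \<and> h t \<le> 1" and "real r + 1 \<le> N"
  shows "\<bar>(\<Sum>t=1..r. W t * h t) + W 0 - ((\<Sum>t=1..r. V t * h t) + V 0)\<bar> \<le> N\<^sup>2"
proof -
  have "(\<Sum>t=1..r. \<bar>h t\<bar>) \<le> (\<Sum>t=1..r. 1)"
    using assms(2) by (intro sum_mono) auto
  then have "N * ((\<Sum>t=1..r. \<bar>h t\<bar>) + 1) \<le> N * N"
    using assms(3) by (intro mult_left_mono) auto
  with perturbed_affine_dist[of "{1..r}" W V N h] assms(1) show ?thesis
    by (simp add: power2_eq_square)
qed

lemma identity_gate: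
  fixes W V h :: "nat \<Rightarrow> real"
  assumes "1 \<le> r" and "real r + 1 \<le> N" and "\<forall>t. \<bar>W t - V t\<bar> \<le> N"
    and "V 1 = 6 * N\<^sup>2" and "V 0 = - 3 * N\<^sup>2" and "\<forall>t>1. V t = 0"
    and "\<forall>t\<in>{1..r}. 0 \<le> h t \<and> h t \<le> 1"
  shows "5/6 \<le> h 1 \<Longrightarrow> 1 - exp (- N) \<le> sigma ((\<Sum>t=1..r. W t * h t) + W 0)"
    and "h 1 \<le> 1/6 \<Longrightarrow> sigma ((\<Sum>t=1..r. W t * h t) + W 0) \<le> exp (- N)"
proof -
  have "(\<Sum>t=1..r. V t * h t) = (\<Sum>t\<in>{1}. V t * h t)"
    using assms(1,6) by (intro sum.mono_neutral_right) auto
  then have close: "\<bar>(\<Sum>t=1..r. W t * h t) + W 0 - (6 * N\<^sup>2 * h 1 - 3 * N\<^sup>2)\<bar> \<le> N\<^sup>2"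
    using perturbed_affine_dist_unit_inputs[OF assms(3,7,2)] assms(4,5) by simp
  have N_le: "N \<le> N\<^sup>2"
    using assms(2) by (simp add: power2_eq_square)
  show "1 - exp (- N) \<le> sigma ((\<Sum>t=1..r. W t * h t) + W 0)" if "5/6 \<le> h 1"
  proof -
    have "N\<^sup>2 * (5/6) \<le> N\<^sup>2 * h 1"
      using that by (intro mult_left_mono) auto
    with close N_le show ?thesis
      by (intro sigma_ge_one_minus_exp_neg) (simp add: abs_le_iff)
  qed
  show "sigma ((\<Sum>t=1..r. W t * h t) + W 0) \<le> exp (- N)" if "h 1 \<le> 1/6"
  proof -
    have "N\<^sup>2 * h 1 \<le> N\<^sup>2 * (1/6)"
      using that by (intro mult_left_mono) auto
    with close N_le show ?thesis
      by (intro sigma_le_exp_neg) (simp add: abs_le_iff)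
  qed
qed

lemma and_gate:
  fixes W V h :: "nat \<Rightarrow> real"
  assumes "1 \<le> d" and "2 * d \<le> r" and "real r + 1 \<le> N" and "\<forall>t. \<bar>W t - V t\<bar> \<le> N"
    and "\<forall>t\<in>{1..2*d}. V t = 8 * N\<^sup>2" and "V 0 = - 8 * N\<^sup>2 * (2 * real d - 1/2)"
    and "\<forall>t>2*d. V t = 0"
    and "\<forall>t\<in>{1..r}. 0 \<le> h t \<and> h t \<le> 1"
  shows "\<forall>t\<in>{1..2*d}. 1 - 1 / (16 * real d) \<le> h t \<Longrightarrow>
      1 - exp (- N) \<le> sigma ((\<Sum>t=1..r. W t * h t) + W 0)"
    and "\<exists>t\<in>{1..2*d}. h t \<le> 1/4 \<Longrightarrow> sigma ((\<Sum>t=1..r. W t * h t) + W 0) \<le> exp (- N)"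
proof -
  have "(\<Sum>t=1..r. V t * h t) = (\<Sum>t=1..2*d. 8 * N\<^sup>2 * h t)"
  proof -
    have "(\<Sum>t=1..r. V t * h t) = (\<Sum>t=1..2*d. V t * h t)"
      using assms(2,7) by (intro sum.mono_neutral_right) auto
    also have "\<dots> = (\<Sum>t=1..2*d. 8 * N\<^sup>2 * h t)"
      using assms(5) by (intro sum.cong) auto
    finally show ?thesis .
  qed
  then have close: "\<bar>(\<Sum>t=1..r. W t * h t) + W 0 - 8 * N\<^sup>2 * ((\<Sum>t=1..2*d. h t) - (2 * real d - 1/2))\<bar>
      \<le> N\<^sup>2"
    using perturbed_affine_dist_unit_inputs[OF assms(4,8,3)] assms(6)
    by (simp add: sum_distrib_left algebra_simps)
  have N_le: "N \<le> N\<^sup>2"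
    using assms(3) by (simp add: power2_eq_square)
  show "1 - exp (- N) \<le> sigma ((\<Sum>t=1..r. W t * h t) + W 0)"
    if "\<forall>t\<in>{1..2*d}. 1 - 1 / (16 * real d) \<le> h t"
  proof -
    have "(\<Sum>t=1..2*d. 1 - 1 / (16 * real d)) \<le> (\<Sum>t=1..2*d. h t)"
      using that by (intro sum_mono) auto
    moreover have "(\<Sum>t=1..2*d. 1 - 1 / (16 * real d)) = 2 * real d - 1/8"
      using assms(1) by (simp add: field_simps)
    ultimately have "8 * N\<^sup>2 * (3/8) \<le> 8 * N\<^sup>2 * ((\<Sum>t=1..2*d. h t) - (2 * real d - 1/2))"
      by (intro mult_left_mono) auto
    then show ?thesis
      using close N_le by (intro sigma_ge_one_minus_exp_neg) (simp add: abs_le_iff)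
  qed
  show "sigma ((\<Sum>t=1..r. W t * h t) + W 0) \<le> exp (- N)" if "\<exists>t\<in>{1..2*d}. h t \<le> 1/4"
  proof -
    from that obtain t0 where t0: "t0 \<in> {1..2*d}" "h t0 \<le> 1/4" by blast
    have "(\<Sum>t\<in>{1..2*d} - {t0}. h t) \<le> (\<Sum>t\<in>{1..2*d} - {t0}. 1)"
      using assms(2,8) by (intro sum_mono) auto
    then have "(\<Sum>t=1..2*d. h t) \<le> 1/4 + (2 * real d - 1)"
      using t0 assms(1) by (simp add: sum.remove of_nat_diff)
    then have "8 * N\<^sup>2 * ((\<Sum>t=1..2*d. h t) - (2 * real d - 1/2)) \<le> 8 * N\<^sup>2 * (- 1/4)"
      by (intro mult_left_mono) auto
    then show ?thesis
      using close N_le by (intro sigma_le_exp_neg) (simp add: abs_le_iff)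
  qed
qed

lemma perturbed_single_input:
  fixes W V x :: "nat \<Rightarrow> real"
  assumes "\<forall>t. \<bar>W t - V t\<bar> \<le> N" and "j \<in> {1..d}" and "\<forall>t\<in>{1..d}. t \<noteq> j \<longrightarrow> V t = 0"
  shows "\<exists>\<eta>. \<bar>\<eta>\<bar> \<le> N * ((\<Sum>t=1..d. \<bar>x t\<bar>) + 1) \<and> (\<Sum>t=1..d. W t * x t) + W 0 = V j * x j + V 0 + \<eta>"
proof -
  have "(\<Sum>t=1..d. V t * x t) = (\<Sum>t\<in>{j}. V t * x t)"
    using assms(2,3) by (intro sum.mono_neutral_right) auto
  with perturbed_affine_dist[of "{1..d}" W V N x] assms(1) show ?thesis
    by (intro exI[of _ "(\<Sum>t=1..d. W t * x t) + W 0 - ((\<Sum>t=1..d. V t * x t) + V 0)"]) auto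
qed

lemma ramp_active:
  fixes N \<delta> z \<eta> S :: real
  assumes "3 \<le> N" and "1 \<le> d" and "0 < \<delta>" and "3 * \<delta> / 4 \<le> z"
    and "\<bar>\<eta>\<bar> \<le> N * (S + 1)" and "S \<le> real d * N"
  shows "2 * N \<le> 4 * real d * N\<^sup>2 / \<delta> * z + \<eta>"
proof -
  have "4 * real d * N\<^sup>2 / \<delta> * (3 * \<delta> / 4) \<le> 4 * real d * N\<^sup>2 / \<delta> * z"
    using assms(3,4) by (intro mult_left_mono) auto
  then have ramp: "3 * real d * N\<^sup>2 \<le> 4 * real d * N\<^sup>2 / \<delta> * z"
    using assms(3) by simp
  have "N * (S + 1) \<le> N * (real d * N + 1)"
    using assms(1,6) by (intro mult_left_mono) auto
  then have "\<bar>\<eta>\<bar> \<le> real d * N\<^sup>2 + N"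
    using assms(5) by (simp add: algebra_simps power2_eq_square)
  moreover have "1 * N\<^sup>2 \<le> real d * N\<^sup>2"
    using assms(2) by (intro mult_right_mono) auto
  moreover have "3 * N \<le> N\<^sup>2"
    using assms(1) by (simp add: power2_eq_square)
  ultimately show ?thesis
    using ramp by (simp add: abs_le_iff)
qed

lemma ramp_fixed_point_bound:
  fixes D N \<delta> E :: real
  assumes "1 \<le> D" and "3 \<le> N" and "0 < \<delta>" and "\<delta> \<le> 1" and "0 \<le> E"
    and "4 * D * N\<^sup>2 / \<delta> * E \<le> 2 + N + D * N\<^sup>2 + D * N * E"
  shows "E \<le> \<delta> / 2"
proof (rule ccontr)
  assume "\<not> E \<le> \<delta> / 2"
  define t where "t = E / \<delta>"
  have t: "1/2 < t" "E = \<delta> * t"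
    using \<open>\<not> E \<le> \<delta> / 2\<close> assms(3) by (auto simp: t_def field_simps)
  have "D * N * E \<le> D * N * t"
    using assms(1-4) t by (intro mult_left_mono) (auto simp: mult_left_le_one_le)
  then have "t * (D * N * (4 * N - 1)) \<le> 2 + N + D * N\<^sup>2"
    using assms(3,6) t(2) by (simp add: algebra_simps power2_eq_square)
  moreover have "1/2 * (D * N * (4 * N - 1)) < t * (D * N * (4 * N - 1))"
    using t(1) assms(1,2) by (intro mult_strict_right_mono) auto
  moreover have "1 * (N * (N - 1/2)) \<le> D * (N * (N - 1/2))"
    using assms(1,2) by (intro mult_right_mono) auto
  moreover have "3 * N \<le> N * N"
    using assms(2) by (intro mult_right_mono) auto
  ultimately show False
    using assms(2) unfolding power2_eq_square by (simp add: algebra_simps)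
qed

text \<open>The noise of a first-layer pre-activation is proportional to |x|, so open ramps bound |x| only
  in terms of itself; the bound closes because the slope 4 d N^2/\<delta> dominates the noise N d.\<close>

lemma ramps_localize:
  fixes u v x :: "nat \<Rightarrow> real" and N \<delta> :: real
  assumes "3 \<le> N" and "1 \<le> d" and "0 < \<delta>" and "\<delta> \<le> 1"
    and corners: "\<forall>j\<in>{1..d}. - N \<le> u j \<and> v j \<le> N"
    and open_ramps: "\<forall>j\<in>{1..d}.
      - 2 < 4 * real d * N\<^sup>2 / \<delta> * (x j - u j) + N * ((\<Sum>t=1..d. \<bar>x t\<bar>) + 1) \<and>
      - 2 < 4 * real d * N\<^sup>2 / \<delta> * (v j - x j) + N * ((\<Sum>t=1..d. \<bar>x t\<bar>) + 1)"
  shows "\<forall>j\<in>{1..d}. u j - \<delta> / 2 < x j \<and> x j < v j + \<delta> / 2"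
proof -
  define S where "S = (\<Sum>t=1..d. \<bar>x t\<bar>)"
  define c where "c = 4 * real d * N\<^sup>2 / \<delta>"
  define E where "E = (2 + N * (S + 1)) / c"
  have c: "0 < c"
    using assms(1-3) by (simp add: c_def)
  have S: "0 \<le> S"
    by (simp add: S_def sum_nonneg)
  have cE: "c * E = 2 + N * (S + 1)"
    using c by (simp add: E_def)
  have near: "u j - E < x j \<and> x j < v j + E" if "j \<in> {1..d}" for j
  proof -
    have "- 2 < c * (x j - u j) + N * (S + 1)" "- 2 < c * (v j - x j) + N * (S + 1)"
      using open_ramps that unfolding c_def S_def by blast+
    then have "c * (- E) < c * (x j - u j)" "c * (- E) < c * (v j - x j)"
      using cE by simp_all
    then show ?thesis
      using c unfolding mult_less_cancel_left_pos[OF c] by simp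
  qed
  have "S \<le> (\<Sum>t=1..d. N + E)"
    unfolding S_def using near corners by (intro sum_mono) force
  then have "N * S \<le> N * (real d * (N + E))"
    using assms(1) by (intro mult_left_mono) auto
  then have "4 * real d * N\<^sup>2 / \<delta> * E \<le> 2 + N + real d * N\<^sup>2 + real d * N * E"
    using cE unfolding c_def by (simp add: algebra_simps power2_eq_square)
  moreover have "0 \<le> E"
    using assms(1) c S by (simp add: E_def)
  ultimately have "E \<le> \<delta> / 2"
    using assms(1-4) by (intro ramp_fixed_point_bound[where D = "real d"]) auto
  with near show ?thesis
    by force
qed

text \<open>The theorem's conditions on the ideal weights w of the chain q of a cell with corners u, v,
  where N stands for log n.\<close>

definition cell_weights :: "nat \<Rightarrow> nat \<Rightarrow> real \<Rightarrow> real \<Rightarrow> weights \<Rightarrow> nat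
    \<Rightarrow> (nat \<Rightarrow> real) \<Rightarrow> (nat \<Rightarrow> real) \<Rightarrow> bool" where
  "cell_weights d L N \<delta> w q u v \<longleftrightarrow>
    (\<forall>j\<in>{1..d}.
       w 0 q j j = 4 * d * N^2 / \<delta> \<and>
       w 0 q j 0 = - (4 * d * N^2 * u j / \<delta>) \<and>
       w 0 q (j + d) j = - (4 * d * N^2 / \<delta>) \<and>
       w 0 q (j + d) 0 = 4 * d * N^2 * v j / \<delta>) \<and>
    (\<forall>s t. s \<le> 2 * d \<and> s \<noteq> t \<and> s \<noteq> t + d \<and> t > 0 \<longrightarrow> w 0 q s t = 0) \<and>
    (\<forall>t\<in>{1..2*d}. w 1 q 1 t = 8 * N^2) \<and>
    w 1 q 1 0 = - 8 * N^2 * (2 * d - 1/2) \<and>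
    (\<forall>t > 2 * d. w 1 q 1 t = 0) \<and>
    (\<forall>l\<in>{2..L}. w l q 1 1 = 6 * N^2 \<and>
        w l q 1 0 = - 3 * N^2 \<and>
        (\<forall>t > 1. w l q 1 t = 0))"

locale cell_neuron =
  fixes d r L :: nat and N \<delta> :: real and w W :: weights and q :: nat and u v :: "nat \<Rightarrow> real"
  assumes d_pos: "1 \<le> d" and r_ge: "2 * d \<le> r" and N_ge: "real r + 1 \<le> N" and L_ge: "2 \<le> L"
    and delta_pos: "0 < \<delta>" and delta_le_1: "\<delta> \<le> 1"
    and weights: "cell_weights d L N \<delta> w q u v"
    and perturbation: "\<forall>l\<in>{0..L-1}. \<forall>k i. \<bar>w l q k i - W l q k i\<bar> \<le> N"
    and corners: "\<forall>j\<in>{1..d}. - N \<le> u j \<and> v j \<le> N"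
begin

lemma N_ge_3: "3 \<le> N"
  using d_pos r_ge N_ge by linarith

lemma exp_neg_twice_N: "exp (- (2 * N)) \<le> 1 / (16 * real d)"
proof -
  have "2 * real d + 2 \<le> exp N"
    using r_ge N_ge exp_ge_add_one_self[of N] by linarith
  then have "(2 * real d + 2)\<^sup>2 \<le> (exp N)\<^sup>2"
    by (intro power_mono) auto
  moreover have "16 * real d \<le> (2 * real d + 2)\<^sup>2"
    using sum_squares_ge_zero[of "2 * real d - 2" 0] by (simp add: power2_eq_square algebra_simps)
  moreover have "(exp N)\<^sup>2 = exp (2 * N)"
    by (simp add: power2_eq_square flip: exp_add)
  ultimately show ?thesis
    using d_pos by (simp add: exp_minus field_simps)
qed

lemma first_layer_ramps:
  assumes "j \<in> {1..d}"
  shows "\<exists>\<eta>. \<bar>\<eta>\<bar> \<le> N * ((\<Sum>t=1..d. \<bar>x t\<bar>) + 1) \<and>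
      fbar d r W 1 q j x = sigma (4 * real d * N\<^sup>2 / \<delta> * (x j - u j) + \<eta>)"
    and "\<exists>\<eta>. \<bar>\<eta>\<bar> \<le> N * ((\<Sum>t=1..d. \<bar>x t\<bar>) + 1) \<and>
      fbar d r W 1 q (j + d) x = sigma (4 * real d * N\<^sup>2 / \<delta> * (v j - x j) + \<eta>)"
proof -
  have layer0: "\<forall>s t. \<bar>W 0 q s t - w 0 q s t\<bar> \<le> N"
    using perturbation by (auto simp: abs_minus_commute)
  have "w 0 q j j = 4 * real d * N\<^sup>2 / \<delta>" "w 0 q j 0 = - (4 * real d * N\<^sup>2 * u j / \<delta>)"
    "w 0 q (j + d) j = - (4 * real d * N\<^sup>2 / \<delta>)" "w 0 q (j + d) 0 = 4 * real d * N\<^sup>2 * v j / \<delta>"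
    using weights assms unfolding cell_weights_def by auto
  then have w: "w 0 q j j * x j + w 0 q j 0 = 4 * real d * N\<^sup>2 / \<delta> * (x j - u j)"
    "w 0 q (j + d) j * x j + w 0 q (j + d) 0 = 4 * real d * N\<^sup>2 / \<delta> * (v j - x j)"
    by (simp_all add: algebra_simps diff_divide_distrib)
  have zero: "w 0 q s t = 0" if "s \<le> 2 * d" "s \<noteq> t" "s \<noteq> t + d" "0 < t" for s t
    using weights that unfolding cell_weights_def by blast
  have "\<forall>t\<in>{1..d}. t \<noteq> j \<longrightarrow> w 0 q j t = 0" "\<forall>t\<in>{1..d}. t \<noteq> j \<longrightarrow> w 0 q (j + d) t = 0"
    using zero assms by auto
  then have ramp_input: "\<exists>\<eta>. \<bar>\<eta>\<bar> \<le> N * ((\<Sum>t=1..d. \<bar>x t\<bar>) + 1) \<and>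
      (\<Sum>t=1..d. W 0 q s t * x t) + W 0 q s 0 = w 0 q s j * x j + w 0 q s 0 + \<eta>"
    if "s \<in> {j, j + d}" for s
    using that layer0 assms by (intro perturbed_single_input) auto
  show "\<exists>\<eta>. \<bar>\<eta>\<bar> \<le> N * ((\<Sum>t=1..d. \<bar>x t\<bar>) + 1) \<and>
      fbar d r W 1 q j x = sigma (4 * real d * N\<^sup>2 / \<delta> * (x j - u j) + \<eta>)"
    using ramp_input[of j] w(1) unfolding fbar_one by auto
  show "\<exists>\<eta>. \<bar>\<eta>\<bar> \<le> N * ((\<Sum>t=1..d. \<bar>x t\<bar>) + 1) \<and>
      fbar d r W 1 q (j + d) x = sigma (4 * real d * N\<^sup>2 / \<delta> * (v j - x j) + \<eta>)"
    using ramp_input[of "j + d"] w(2) unfolding fbar_one by auto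
qed

lemma second_layer:
  shows "\<forall>t\<in>{1..2*d}. 1 - 1 / (16 * real d) \<le> fbar d r W 1 q t x \<Longrightarrow>
      1 - exp (- N) \<le> fbar d r W 2 q 1 x"
    and "\<exists>t\<in>{1..2*d}. fbar d r W 1 q t x \<le> 1/4 \<Longrightarrow> fbar d r W 2 q 1 x \<le> exp (- N)"
proof -
  have fbar_2: "fbar d r W 2 q 1 x = sigma ((\<Sum>t=1..r. W 1 q 1 t * fbar d r W 1 q t x) + W 1 q 1 0)"
    using fbar_Suc[of 1] by (simp add: numeral_2_eq_2)
  have perturbed: "\<forall>t. \<bar>W 1 q 1 t - w 1 q 1 t\<bar> \<le> N"
    using perturbation L_ge by (auto simp: abs_minus_commute)
  have ideal: "\<forall>t\<in>{1..2*d}. w 1 q 1 t = 8 * N\<^sup>2" "w 1 q 1 0 = - 8 * N\<^sup>2 * (2 * real d - 1/2)"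
    "\<forall>t>2*d. w 1 q 1 t = 0"
    using weights unfolding cell_weights_def by auto
  have inputs: "\<forall>t\<in>{1..r}. 0 \<le> fbar d r W 1 q t x \<and> fbar d r W 1 q t x \<le> 1"
    using fbar_pos_less_one[of 1] by (auto intro: less_imp_le)
  note gate = and_gate[OF d_pos r_ge N_ge perturbed ideal inputs]
  show "\<forall>t\<in>{1..2*d}. 1 - 1 / (16 * real d) \<le> fbar d r W 1 q t x \<Longrightarrow>
      1 - exp (- N) \<le> fbar d r W 2 q 1 x"
    and "\<exists>t\<in>{1..2*d}. fbar d r W 1 q t x \<le> 1/4 \<Longrightarrow> fbar d r W 2 q 1 x \<le> exp (- N)"
    unfolding fbar_2 by (fact gate)+
qed

lemma upper_layer:
  assumes "2 \<le> p" and "p < L"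
  shows "1 - exp (- N) \<le> fbar d r W p q 1 x \<Longrightarrow> 1 - exp (- N) \<le> fbar d r W (Suc p) q 1 x"
    and "fbar d r W p q 1 x \<le> exp (- N) \<Longrightarrow> fbar d r W (Suc p) q 1 x \<le> exp (- N)"
proof -
  have fbar_p: "fbar d r W (Suc p) q 1 x =
      sigma ((\<Sum>t=1..r. W p q 1 t * fbar d r W p q t x) + W p q 1 0)"
    using assms(1) by (intro fbar_Suc) simp
  have perturbed: "\<forall>t. \<bar>W p q 1 t - w p q 1 t\<bar> \<le> N"
    using perturbation assms by (auto simp: abs_minus_commute)
  have ideal: "w p q 1 1 = 6 * N\<^sup>2" "w p q 1 0 = - 3 * N\<^sup>2" "\<forall>t>1. w p q 1 t = 0"
    using weights assms unfolding cell_weights_def by auto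
  have inputs: "\<forall>t\<in>{1..r}. 0 \<le> fbar d r W p q t x \<and> fbar d r W p q t x \<le> 1"
    using fbar_pos_less_one[of p] assms(1) by (auto intro: less_imp_le)
  note gate = identity_gate[OF _ N_ge perturbed ideal inputs]
  have "exp (- N) \<le> 1/8"
    using N_ge_3 by (rule exp_neg_le_eighth)
  then show "1 - exp (- N) \<le> fbar d r W p q 1 x \<Longrightarrow> 1 - exp (- N) \<le> fbar d r W (Suc p) q 1 x"
    and "fbar d r W p q 1 x \<le> exp (- N) \<Longrightarrow> fbar d r W (Suc p) q 1 x \<le> exp (- N)"
    unfolding fbar_p using gate d_pos r_ge by auto
qed

lemma output_follows_second_layer:
  assumes "2 \<le> p" and "p \<le> L"
  shows "(1 - exp (- N) \<le> fbar d r W 2 q 1 x \<longrightarrow> 1 - exp (- N) \<le> fbar d r W p q 1 x) \<and>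
    (fbar d r W 2 q 1 x \<le> exp (- N) \<longrightarrow> fbar d r W p q 1 x \<le> exp (- N))"
  using assms
proof (induction p rule: dec_induct)
  case base
  then show ?case by simp
next
  case (step p)
  then show ?case
    using upper_layer[of p x] by auto
qed

lemma first_layer_active:
  assumes "\<forall>j\<in>{1..d}. u j + 3 * \<delta> / 4 \<le> x j \<and> x j \<le> v j - 3 * \<delta> / 4" and t: "t \<in> {1..2*d}"
  shows "1 - 1 / (16 * real d) \<le> fbar d r W 1 q t x"
proof -
  have "(\<Sum>t=1..d. \<bar>x t\<bar>) \<le> (\<Sum>t=1..d. N)"
    using assms(1) corners delta_pos by (intro sum_mono) force
  then have S: "(\<Sum>t=1..d. \<bar>x t\<bar>) \<le> real d * N"
    by simp
  have active: "1 - 1 / (16 * real d) \<le> sigma (4 * real d * N\<^sup>2 / \<delta> * z + \<eta>)"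
    if "3 * \<delta> / 4 \<le> z" and "\<bar>\<eta>\<bar> \<le> N * ((\<Sum>t=1..d. \<bar>x t\<bar>) + 1)" for z \<eta>
    using sigma_ge_one_minus_exp_neg[OF ramp_active[OF N_ge_3 d_pos delta_pos that S]]
      exp_neg_twice_N by linarith
  show ?thesis
  proof (cases "t \<le> d")
    case True
    then have j: "t \<in> {1..d}"
      using t by simp
    obtain \<eta> where \<eta>: "\<bar>\<eta>\<bar> \<le> N * ((\<Sum>t=1..d. \<bar>x t\<bar>) + 1)"
      and fbar_eq: "fbar d r W 1 q t x = sigma (4 * real d * N\<^sup>2 / \<delta> * (x t - u t) + \<eta>)"
      using first_layer_ramps(1)[OF j] by blast
    have "3 * \<delta> / 4 \<le> x t - u t"
      using assms(1) j by fastforce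
    then show ?thesis
      using active[OF _ \<eta>] fbar_eq by simp
  next
    case False
    then have j: "t - d \<in> {1..d}" and t_eq: "t = t - d + d"
      using t by auto
    obtain \<eta> where \<eta>: "\<bar>\<eta>\<bar> \<le> N * ((\<Sum>t=1..d. \<bar>x t\<bar>) + 1)"
      and fbar_eq: "fbar d r W 1 q (t - d + d) x =
        sigma (4 * real d * N\<^sup>2 / \<delta> * (v (t - d) - x (t - d)) + \<eta>)"
      using first_layer_ramps(2)[OF j] by blast
    have "3 * \<delta> / 4 \<le> v (t - d) - x (t - d)"
      using assms(1) j by fastforce
    then show ?thesis
      using active[OF _ \<eta>] fbar_eq t_eq by simp
  qed
qed

lemma near_if_first_layer_open:
  assumes open_gates: "\<forall>t\<in>{1..2*d}. 1/4 < fbar d r W 1 q t x"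
  shows "\<forall>j\<in>{1..d}. u j - \<delta> / 2 < x j \<and> x j < v j + \<delta> / 2"
proof -
  have "- 2 < 4 * real d * N\<^sup>2 / \<delta> * (x j - u j) + N * ((\<Sum>t=1..d. \<bar>x t\<bar>) + 1) \<and>
      - 2 < 4 * real d * N\<^sup>2 / \<delta> * (v j - x j) + N * ((\<Sum>t=1..d. \<bar>x t\<bar>) + 1)"
    if j: "j \<in> {1..d}" for j
  proof -
    obtain \<eta> where \<eta>: "\<bar>\<eta>\<bar> \<le> N * ((\<Sum>t=1..d. \<bar>x t\<bar>) + 1)"
      and lower: "fbar d r W 1 q j x = sigma (4 * real d * N\<^sup>2 / \<delta> * (x j - u j) + \<eta>)"
      using first_layer_ramps(1)[OF j] by blast
    obtain \<eta>' where \<eta>': "\<bar>\<eta>'\<bar> \<le> N * ((\<Sum>t=1..d. \<bar>x t\<bar>) + 1)"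
      and upper: "fbar d r W 1 q (j + d) x = sigma (4 * real d * N\<^sup>2 / \<delta> * (v j - x j) + \<eta>')"
      using first_layer_ramps(2)[OF j] by blast
    have "j \<in> {1..2*d}" "j + d \<in> {1..2*d}"
      using j by auto
    then have "1/4 < fbar d r W 1 q j x" "1/4 < fbar d r W 1 q (j + d) x"
      using open_gates by blast+
    then have "1/4 < sigma (4 * real d * N\<^sup>2 / \<delta> * (x j - u j) + \<eta>)"
      "1/4 < sigma (4 * real d * N\<^sup>2 / \<delta> * (v j - x j) + \<eta>')"
      unfolding lower upper .
    then have "- 2 < 4 * real d * N\<^sup>2 / \<delta> * (x j - u j) + \<eta>"
      "- 2 < 4 * real d * N\<^sup>2 / \<delta> * (v j - x j) + \<eta>'"
      by (blast intro: neg_two_less_if_sigma_gt_quarter)+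
    with \<eta> \<eta>' show ?thesis
      by (simp add: abs_le_iff)
  qed
  then show ?thesis
    using ramps_localize[OF N_ge_3 d_pos delta_pos delta_le_1 corners] by blast
qed

lemma output_high:
  assumes "\<forall>j\<in>{1..d}. u j + 3 * \<delta> / 4 \<le> x j \<and> x j \<le> v j - 3 * \<delta> / 4"
  shows "1 - exp (- N) \<le> fbar d r W L q 1 x"
proof -
  have "1 - exp (- N) \<le> fbar d r W 2 q 1 x"
    using first_layer_active[OF assms] by (intro second_layer(1)) blast
  then show ?thesis
    using output_follows_second_layer[OF L_ge order_refl] by blast
qed

lemma output_low:
  assumes "\<not> (\<forall>j\<in>{1..d}. u j - \<delta> / 2 < x j \<and> x j < v j + \<delta> / 2)"
  shows "fbar d r W L q 1 x \<le> exp (- N)"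
proof (rule ccontr)
  assume "\<not> ?thesis"
  then have "\<not> fbar d r W 2 q 1 x \<le> exp (- N)"
    using output_follows_second_layer[OF L_ge order_refl] by blast
  then have "\<forall>t\<in>{1..2*d}. 1/4 < fbar d r W 1 q t x"
    using second_layer(2) by force
  with assms show False
    using near_if_first_layer_open by blast
qed

end

lemma sum_near_single_indicator:
  fixes \<alpha> F :: "nat \<Rightarrow> real"
  assumes "finite A" and "k0 \<in> A" and "\<forall>k\<in>A. \<bar>\<alpha> k\<bar> \<le> M" and "\<forall>k\<in>A. 0 \<le> F k \<and> F k \<le> 1"
    and "1 - \<epsilon> \<le> F k0" and "\<forall>k\<in>A - {k0}. F k \<le> \<epsilon>"
  shows "\<bar>(\<Sum>k\<in>A. \<alpha> k * F k) - y\<bar> \<le> \<bar>\<alpha> k0 - y\<bar> + real (card A) * M * \<epsilon>"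
proof -
  have "(\<Sum>k\<in>A. \<alpha> k * F k) - y = (\<alpha> k0 - y) - \<alpha> k0 * (1 - F k0) + (\<Sum>k\<in>A - {k0}. \<alpha> k * F k)"
    using assms(1,2) by (simp add: sum.remove algebra_simps)
  moreover have "\<bar>\<alpha> k0 * (1 - F k0)\<bar> \<le> M * \<epsilon>"
    using assms(2-5) by (auto simp: abs_mult intro!: mult_mono)
  moreover have "\<bar>\<Sum>k\<in>A - {k0}. \<alpha> k * F k\<bar> \<le> (\<Sum>k\<in>A - {k0}. M * \<epsilon>)"
    using assms(3,4,6)
    by (intro sum_abs[THEN order_trans] sum_mono) (auto simp: abs_mult intro!: mult_mono)
  moreover have "0 < card A"
    using assms(1,2) by (auto simp: card_gt_0_iff)
  then have "real (card (A - {k0})) = real (card A) - 1"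
    using assms(1,2) by (simp add: of_nat_diff)
  ultimately show ?thesis
    by (simp add: algebra_simps)
qed

lemma sum_few_active:
  fixes \<alpha> F :: "nat \<Rightarrow> real"
  assumes "finite A" and "B \<subseteq> A" and "\<forall>k\<in>A. \<bar>\<alpha> k\<bar> \<le> M" and "\<forall>k\<in>A. 0 \<le> F k \<and> F k \<le> 1"
    and "0 \<le> M" and "0 \<le> \<epsilon>" and "\<forall>k\<in>A - B. F k \<le> \<epsilon>"
  shows "\<bar>\<Sum>k\<in>A. \<alpha> k * F k\<bar> \<le> M * (real (card B) + real (card A) * \<epsilon>)"
proof -
  have term_bound: "\<bar>\<alpha> k * F k\<bar> \<le> M * F k" if "k \<in> A" for k
    using assms(3,4) that by (auto simp: abs_mult intro: mult_right_mono)
  have "\<bar>\<Sum>k\<in>A. \<alpha> k * F k\<bar> \<le> (\<Sum>k\<in>A - B. \<bar>\<alpha> k * F k\<bar>) + (\<Sum>k\<in>B. \<bar>\<alpha> k * F k\<bar>)"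
    unfolding sum.subset_diff[OF assms(2,1)]
    by (rule order_trans[OF abs_triangle_ineq add_mono[OF sum_abs sum_abs]])
  also have "\<dots> \<le> (\<Sum>k\<in>A - B. M * \<epsilon>) + (\<Sum>k\<in>B. M * 1)"
  proof (intro add_mono sum_mono)
    show "\<bar>\<alpha> k * F k\<bar> \<le> M * \<epsilon>" if "k \<in> A - B" for k
      using that term_bound[of k] mult_left_mono[of "F k" \<epsilon> M] assms(5,7) by auto
    show "\<bar>\<alpha> k * F k\<bar> \<le> M * 1" if "k \<in> B" for k
      using that term_bound[of k] mult_left_mono[of "F k" 1 M] assms(2,4,5) by auto
  qed
  also have "\<dots> \<le> real (card A) * (M * \<epsilon>) + M * real (card B)"
    using assms(5,6) card_mono[OF assms(1) Diff_subset[of A B]] by (simp add: mult_right_mono)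
  finally show ?thesis
    by (simp add: algebra_simps)
qed

lemma grid_interval_containing:
  fixes a x w \<delta> :: real
  assumes "0 < w" and "0 < \<delta>" and "a \<le> x" and "x \<le> a + real K * w"
    and "\<forall>j\<le>K. \<delta> \<le> \<bar>x - (a + real j * w)\<bar>"
  shows "\<exists>i<K. a + real i * w + \<delta> \<le> x \<and> x + \<delta> \<le> a + real (i + 1) * w"
proof -
  define i where "i = nat \<lfloor>(x - a) / w\<rfloor>"
  have "0 \<le> (x - a) / w"
    using assms(1,3) by simp
  then have i: "real i \<le> (x - a) / w" "(x - a) / w < real i + 1"
    unfolding i_def by linarith+
  then have below: "a + real i * w \<le> x" and above: "x < a + real (i + 1) * w"
    using assms(1) by (simp_all add: field_simps)
  have "(x - a) / w \<le> real K"
    using assms(1,4) by (simp add: divide_le_eq algebra_simps)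
  then have "i \<le> K"
    using i(1) by linarith
  have lower: "a + real i * w + \<delta> \<le> x"
    using assms(5) \<open>i \<le> K\<close> below by (auto simp: abs_if)
  have "i < K"
    using lower assms(2,4) \<open>i \<le> K\<close> by (cases "i = K") auto
  moreover have "\<delta> \<le> \<bar>x - (a + real (i + 1) * w)\<bar>"
    using assms(5)[rule_format, of "i + 1"] \<open>i < K\<close> by simp
  then have "x + \<delta> \<le> a + real (i + 1) * w"
    using above by (auto simp: abs_if)
  ultimately show ?thesis
    using lower by blast
qed

lemma nats_near_subset: "{i::nat. y - 3/2 < real i \<and> real i < y + 1/2} \<subseteq> nat ` {\<lfloor>y\<rfloor> - 1 .. \<lfloor>y\<rfloor> + 1}"
proof
  fix i :: nat
  assume "i \<in> {i. y - 3/2 < real i \<and> real i < y + 1/2}"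
  then have "y - 3/2 < real i" "real i < y + 1/2"
    by auto
  moreover have "of_int \<lfloor>y\<rfloor> \<le> y" "y < of_int \<lfloor>y\<rfloor> + 1"
    by linarith+
  ultimately have "\<lfloor>y\<rfloor> - 1 \<le> int i" "int i \<le> \<lfloor>y\<rfloor> + 1"
    by linarith+
  then show "i \<in> nat ` {\<lfloor>y\<rfloor> - 1 .. \<lfloor>y\<rfloor> + 1}"
    by (intro image_eqI[of _ _ "int i"]) auto
qed

lemma finite_nats_near: "finite {i::nat. y - 3/2 < real i \<and> real i < y + 1/2}"
  using nats_near_subset by (rule finite_subset) simp

lemma card_nats_near_le_3: "card {i::nat. y - 3/2 < real i \<and> real i < y + 1/2} \<le> 3"
proof -
  have "card {i::nat. y - 3/2 < real i \<and> real i < y + 1/2} \<le> card (nat ` {\<lfloor>y\<rfloor> - 1 .. \<lfloor>y\<rfloor> + 1})"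
    using nats_near_subset by (rule card_mono[rotated]) simp
  also have "\<dots> \<le> card {\<lfloor>y\<rfloor> - 1 .. \<lfloor>y\<rfloor> + 1}"
    by (rule card_image_le) simp
  finally show ?thesis
    by simp
qed

locale cell_grid =
  fixes d K :: nat and a b :: "nat \<Rightarrow> real" and \<Delta> \<delta> :: real
  assumes d_pos: "1 \<le> d" and K_pos: "1 \<le> K" and delta_pos: "0 < \<delta>" and Delta_pos: "0 < \<Delta>"
    and sides: "\<forall>i\<in>{1..d}. b i - a i = \<Delta>"
begin

definition width :: real where
  "width = \<Delta> / real K"

definition margin :: real where
  "margin = min \<delta> width / 4"

definition cell :: "nat \<Rightarrow> nat \<Rightarrow> nat" where
  "cell = (SOME g. bij_betw g {1..K^d} (PiE {1..d} (\<lambda>_. {0..<K})))"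

definition lo :: "nat \<Rightarrow> nat \<Rightarrow> real" where
  "lo k j = (if j \<in> {1..d} then a j + real (cell k j) * width else 0)"

text \<open>The upper corner is moved inwards by margin so that it lies in [a, b), as the theorem demands
  of v_k; margin \<le> \<delta>/4 keeps the ramps of the cell containing x open.\<close>

definition hi :: "nat \<Rightarrow> nat \<Rightarrow> real" where
  "hi k j = (if j \<in> {1..d} then lo k j + width - margin else 0)"

lemma width_pos: "0 < width"
  using Delta_pos K_pos by (simp add: width_def)

lemma margin_bounds: "0 < margin" "margin \<le> \<delta> / 4" "margin \<le> width / 4"
  using delta_pos width_pos by (auto simp: margin_def)

lemma b_eq: "i \<in> {1..d} \<Longrightarrow> b i = a i + real K * width"
  using sides K_pos by (force simp: width_def)

lemma cell_bij: "bij_betw cell {1..K^d} (PiE {1..d} (\<lambda>_. {0..<K}))"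
proof -
  have "\<exists>g. bij_betw g {1..K^d} (PiE {1..d} (\<lambda>_. {0..<K}))"
    by (intro finite_same_card_bij) (auto simp: card_PiE finite_PiE)
  then show ?thesis
    unfolding cell_def by (rule someI_ex)
qed

lemma cell_less: "k \<in> {1..K^d} \<Longrightarrow> j \<in> {1..d} \<Longrightarrow> cell k j < K"
  using bij_betwE[OF cell_bij] by (auto simp: PiE_iff)

lemma cell_eqI:
  assumes "k \<in> {1..K^d}" and "k' \<in> {1..K^d}" and "\<forall>j\<in>{1..d}. cell k j = cell k' j"
  shows "k = k'"
proof -
  have "cell k = cell k'"
    using bij_betwE[OF cell_bij] assms by (intro PiE_ext[of _ "{1..d}" "\<lambda>_. {0..<K}"]) auto
  then show ?thesis
    using bij_betw_imp_inj_on[OF cell_bij] assms(1,2) by (auto dest: inj_onD)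
qed

lemma lo_in_Rd: "lo k \<in> Rd d" and hi_in_Rd: "hi k \<in> Rd d"
  by (auto simp: Rd_def lo_def hi_def)

lemma hi_eq: "j \<in> {1..d} \<Longrightarrow> hi k j = lo k j + width - margin"
  by (simp add: hi_def)

lemma corners_in_box:
  assumes "k \<in> {1..K^d}" and "j \<in> {1..d}"
  shows "a j \<le> lo k j \<and> lo k j < b j \<and> a j \<le> hi k j \<and> hi k j < b j"
proof -
  have "real (cell k j) + 1 \<le> real K"
    using cell_less[OF assms] by linarith
  then have "real (cell k j) * width + width \<le> real K * width"
    using width_pos by (metis distrib_right mult_1 mult_right_mono less_imp_le)
  then show ?thesis
    using assms cell_less[OF assms] width_pos margin_bounds b_eq[OF assms(2)]
    by (auto simp: lo_def hi_def)
qed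

lemma containing_cell:
  assumes box: "\<forall>i\<in>{1..d}. a i \<le> x i \<and> x i \<le> b i"
    and off_grid: "\<forall>j\<in>{0..K}. \<forall>i\<in>{1..d}. \<delta> \<le> \<bar>x i - (a i + real j * (b i - a i) / real K)\<bar>"
  obtains k0 where "k0 \<in> {1..K^d}" and "\<forall>j\<in>{1..d}. lo k0 j + \<delta> \<le> x j \<and> x j + \<delta> \<le> lo k0 j + width"
proof -
  have "\<exists>i<K. a j + real i * width + \<delta> \<le> x j \<and> x j + \<delta> \<le> a j + real (i + 1) * width"
    if j: "j \<in> {1..d}" for j
  proof (rule grid_interval_containing[OF width_pos delta_pos])
    show "a j \<le> x j" "x j \<le> a j + real K * width"
      using bspec[OF box j] b_eq[OF j] by auto
    show "\<forall>i\<le>K. \<delta> \<le> \<bar>x j - (a j + real i * width)\<bar>"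
      using off_grid j sides by (auto simp: width_def)
  qed
  then obtain ii where ii: "\<forall>j\<in>{1..d}. ii j < K \<and>
      a j + real (ii j) * width + \<delta> \<le> x j \<and> x j + \<delta> \<le> a j + real (ii j + 1) * width"
    by metis
  then have "restrict ii {1..d} \<in> PiE {1..d} (\<lambda>_. {0..<K})"
    by auto
  then obtain k0 where k0: "k0 \<in> {1..K^d}" "cell k0 = restrict ii {1..d}"
    using bij_betw_imp_surj_on[OF cell_bij] by (metis imageE)
  show ?thesis
  proof (rule that[OF k0(1)])
    show "\<forall>j\<in>{1..d}. lo k0 j + \<delta> \<le> x j \<and> x j + \<delta> \<le> lo k0 j + width"
      using ii k0(2) by (simp add: lo_def algebra_simps)
  qed
qed

lemma far_from_other_cells:
  assumes k0: "k0 \<in> {1..K^d}" and k: "k \<in> {1..K^d}" "k \<noteq> k0"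
    and inside: "\<forall>j\<in>{1..d}. lo k0 j + \<delta> \<le> x j \<and> x j + \<delta> \<le> lo k0 j + width"
  shows "\<not> (\<forall>j\<in>{1..d}. lo k j - \<delta> / 2 < x j \<and> x j < hi k j + \<delta> / 2)"
proof
  assume near: "\<forall>j\<in>{1..d}. lo k j - \<delta> / 2 < x j \<and> x j < hi k j + \<delta> / 2"
  have "cell k j = cell k0 j" if j: "j \<in> {1..d}" for j
  proof (rule ccontr)
    have x: "lo k0 j + \<delta> \<le> x j" "x j + \<delta> \<le> lo k0 j + width"
      using inside j by auto
    assume "cell k j \<noteq> cell k0 j"
    then consider "real (cell k j) + 1 \<le> real (cell k0 j)"
      | "real (cell k0 j) + 1 \<le> real (cell k j)"
      by linarith
    then have "hi k j + \<delta> \<le> x j \<or> x j + \<delta> \<le> lo k j"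
    proof cases
      case 1
      then have "(real (cell k j) + 1) * width \<le> real (cell k0 j) * width"
        using width_pos by (intro mult_right_mono) auto
      then show ?thesis
        using x j margin_bounds by (auto simp: hi_def lo_def algebra_simps)
    next
      case 2
      then have "(real (cell k0 j) + 1) * width \<le> real (cell k j) * width"
        using width_pos by (intro mult_right_mono) auto
      then show ?thesis
        using x j by (auto simp: lo_def algebra_simps)
    qed
    then show False
      using near j delta_pos by force
  qed
  then show False
    using cell_eqI[OF k(1) k0] k(2) by blast
qed

lemma card_near_cells:
  assumes "\<delta> \<le> width"
  shows "card {k \<in> {1..K^d}. \<forall>j\<in>{1..d}. lo k j - \<delta> / 2 < x j \<and> x j < hi k j + \<delta> / 2} \<le> 3 ^ d"
proof -
  let ?near = "{k \<in> {1..K^d}. \<forall>j\<in>{1..d}. lo k j - \<delta> / 2 < x j \<and> x j < hi k j + \<delta> / 2}"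
  define T where
    "T j = {i::nat. (x j - a j) / width - 3/2 < real i \<and> real i < (x j - a j) / width + 1/2}" for j
  have "cell ` ?near \<subseteq> PiE {1..d} T"
  proof
    fix p
    assume "p \<in> cell ` ?near"
    then obtain k where k: "k \<in> ?near" and p: "p = cell k"
      by blast
    have "cell k j \<in> T j" if j: "j \<in> {1..d}" for j
    proof -
      have "lo k j - \<delta> / 2 < x j" "x j < hi k j + \<delta> / 2"
        using k j by auto
      then have "a j + real (cell k j) * width - width / 2 < x j"
        "x j < a j + real (cell k j) * width + 3 / 2 * width"
        using j assms margin_bounds by (auto simp: lo_def hi_def)
      then show ?thesis
        using width_pos by (simp add: T_def field_simps)
    qed
    moreover have "cell k \<in> extensional {1..d}"
      using bij_betwE[OF cell_bij] k by (auto simp: PiE_iff)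
    ultimately show "p \<in> PiE {1..d} T"
      using p by (simp add: PiE_iff)
  qed
  have "inj_on cell ?near"
    using bij_betw_imp_inj_on[OF cell_bij] by (rule inj_on_subset) auto
  then have "card ?near = card (cell ` ?near)"
    by (simp add: card_image)
  also have "\<dots> \<le> card (PiE {1..d} T)"
    using \<open>cell ` ?near \<subseteq> PiE {1..d} T\<close>
    by (rule card_mono[rotated]) (simp add: T_def finite_PiE finite_nats_near)
  also have "\<dots> \<le> 3 ^ d"
    unfolding card_PiE[OF finite_atLeastAtMost]
    using prod_le_power[of "{1..d}" "\<lambda>j. card (T j)" 3] card_nats_near_le_3 by (simp add: T_def)
  finally show ?thesis .
qed

end

lemma abs_le_supnorm_d:
  assumes "bdd_above ((\<lambda>x. \<bar>m x\<bar>) ` Rd d)" and "y \<in> Rd d"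
  shows "\<bar>m y\<bar> \<le> supnorm_d d m"
  unfolding supnorm_d_def using assms by (rule cSUP_upper[rotated])

lemma Lipschitz_const_nonneg:
  assumes "1 \<le> d" and "\<forall>x\<in>Rd d. \<forall>y\<in>Rd d. \<bar>m x - m y\<bar> \<le> C * dist_d d x y"
  shows "0 \<le> C"
proof -
  define e :: "nat \<Rightarrow> real" where "e j = (if j = 1 then 1 else 0)" for j
  have "e \<in> Rd d" "(\<lambda>_. 0) \<in> Rd d"
    using assms(1) by (auto simp: Rd_def e_def)
  then have "0 \<le> C * dist_d d e (\<lambda>_. 0)"
    using assms(2) by (meson abs_ge_zero order_trans)
  moreover have "1 \<le> dist_d d e (\<lambda>_. 0)"
    using member_le_L2_set[of "{1..d}" 1 "\<lambda>j. e j - 0"] assms(1) by (simp add: dist_d_def e_def)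
  ultimately show ?thesis
    by (simp add: zero_le_mult_iff)
qed

lemma net_eq_sum:
  assumes "inj_on js A" and "js ` A \<subseteq> {1..Kn}" and "\<forall>k\<in>A. wb L 1 1 (js k) = \<alpha> k"
    and "\<forall>k. k \<notin> js ` A \<longrightarrow> wb L 1 1 k = 0"
  shows "net d r L Kn wb x = (\<Sum>k\<in>A. \<alpha> k * fbar d r wb L (js k) 1 x)"
proof -
  have "net d r L Kn wb x = (\<Sum>j\<in>js ` A. wb L 1 1 j * fbar d r wb L j 1 x)"
    unfolding net_def using assms(2,4) by (intro sum.mono_neutral_right) auto
  also have "\<dots> = (\<Sum>k\<in>A. \<alpha> k * fbar d r wb L (js k) 1 x)"
    using assms(1,3) by (simp add: sum.reindex)
  finally show ?thesis .
qed

context cell_grid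
begin

lemma approximation_off_grid_lines:
  fixes m :: "(nat \<Rightarrow> real) \<Rightarrow> real" and F :: "nat \<Rightarrow> real"
  assumes m_bounded: "\<forall>y\<in>Rd d. \<bar>m y\<bar> \<le> M"
    and m_Lip: "\<forall>x\<in>Rd d. \<forall>y\<in>Rd d. \<bar>m x - m y\<bar> \<le> CLip * dist_d d x y"
    and x: "x \<in> Rd d" and box: "\<forall>i\<in>{1..d}. a i \<le> x i \<and> x i \<le> b i"
    and off_grid: "\<forall>j\<in>{0..K}. \<forall>i\<in>{1..d}. \<delta> \<le> \<bar>x i - (a i + real j * (b i - a i) / real K)\<bar>"
    and F_range: "\<forall>k\<in>{1..K^d}. 0 \<le> F k \<and> F k \<le> 1"
    and F_high: "\<forall>k\<in>{1..K^d}. (\<forall>j\<in>{1..d}. lo k j + 3 * \<delta> / 4 \<le> x j \<and> x j \<le> hi k j - 3 * \<delta> / 4)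
      \<longrightarrow> 1 - \<epsilon> \<le> F k"
    and F_low: "\<forall>k\<in>{1..K^d}. \<not> (\<forall>j\<in>{1..d}. lo k j - \<delta> / 2 < x j \<and> x j < hi k j + \<delta> / 2)
      \<longrightarrow> F k \<le> \<epsilon>"
  shows "\<bar>(\<Sum>k\<in>{1..K^d}. m (lo k) * F k) - m x\<bar> \<le> CLip * real d * width + real (K^d) * M * \<epsilon>"
proof -
  obtain k0 where k0: "k0 \<in> {1..K^d}"
    and inside: "\<forall>j\<in>{1..d}. lo k0 j + \<delta> \<le> x j \<and> x j + \<delta> \<le> lo k0 j + width"
    using containing_cell[OF box off_grid] by blast
  have "1 - \<epsilon> \<le> F k0"
    using F_high k0 inside margin_bounds delta_pos by (force simp: hi_eq)
  moreover have "\<forall>k\<in>{1..K^d} - {k0}. F k \<le> \<epsilon>"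
    using F_low far_from_other_cells[OF k0 _ _ inside] by blast
  moreover have "dist_d d (lo k0) x \<le> (\<Sum>j=1..d. width)"
    unfolding dist_d_def using inside delta_pos
    by (intro order_trans[OF L2_set_le_sum_abs] sum_mono) (force simp: abs_le_iff)
  then have "CLip * dist_d d (lo k0) x \<le> CLip * (real d * width)"
    using Lipschitz_const_nonneg[OF d_pos m_Lip] by (intro mult_left_mono) auto
  then have "\<bar>m (lo k0) - m x\<bar> \<le> CLip * real d * width"
    using m_Lip lo_in_Rd x by (smt (verit) mult.assoc)
  moreover note sum_near_single_indicator[of "{1..K^d}" k0 "\<lambda>k. m (lo k)" M F \<epsilon> "m x"]
  ultimately show ?thesis
    using k0 m_bounded lo_in_Rd F_range by simp
qed

lemma bounded_output:
  fixes \<alpha> F :: "nat \<Rightarrow> real"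
  assumes "\<delta> \<le> width" and "\<forall>k\<in>{1..K^d}. \<bar>\<alpha> k\<bar> \<le> M" and "0 \<le> M" and "0 \<le> \<epsilon>"
    and F_range: "\<forall>k\<in>{1..K^d}. 0 \<le> F k \<and> F k \<le> 1"
    and F_low: "\<forall>k\<in>{1..K^d}. \<not> (\<forall>j\<in>{1..d}. lo k j - \<delta> / 2 < x j \<and> x j < hi k j + \<delta> / 2)
      \<longrightarrow> F k \<le> \<epsilon>"
  shows "\<bar>\<Sum>k\<in>{1..K^d}. \<alpha> k * F k\<bar> \<le> M * (3 ^ d + real (K^d) * \<epsilon>)"
proof -
  let ?near = "{k \<in> {1..K^d}. \<forall>j\<in>{1..d}. lo k j - \<delta> / 2 < x j \<and> x j < hi k j + \<delta> / 2}"
  have "\<bar>\<Sum>k\<in>{1..K^d}. \<alpha> k * F k\<bar> \<le> M * (real (card ?near) + real (card {1..K^d}) * \<epsilon>)"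
    using assms(2-4) F_range F_low by (intro sum_few_active) auto
  also have "\<dots> \<le> M * (3 ^ d + real (K^d) * \<epsilon>)"
    using card_near_cells[OF assms(1), of x] assms(3)
    by (intro mult_left_mono) (simp_all flip: of_nat_power)
  finally show ?thesis .
qed

end

context cell_grid
begin

lemma cell_network_bounds:
  fixes m :: "(nat \<Rightarrow> real) \<Rightarrow> real" and w wb :: weights
  assumes m_bounded: "\<forall>y\<in>Rd d. \<bar>m y\<bar> \<le> M"
    and m_Lip: "\<forall>x\<in>Rd d. \<forall>y\<in>Rd d. \<bar>m x - m y\<bar> \<le> CLip * dist_d d x y"
    and delta_le_1: "\<delta> \<le> 1" and L_ge: "2 \<le> L" and r_ge: "2 * d \<le> r" and N_ge: "real r + 1 \<le> N"
    and box_N: "\<forall>j\<in>{1..d}. - N \<le> a j \<and> b j \<le> N"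
    and js: "inj_on js {1..K^d}" "js ` {1..K^d} \<subseteq> {1..Kn}"
    and weights: "\<forall>k\<in>{1..K^d}. cell_weights d L N \<delta> w (js k) (lo k) (hi k)"
    and output_weights: "\<forall>k\<in>{1..K^d}. wb L 1 1 (js k) = m (lo k)"
      "\<forall>k. k \<notin> js ` {1..K^d} \<longrightarrow> wb L 1 1 k = 0"
    and perturbation: "\<forall>l\<in>{0..L-1}. \<forall>s\<in>{1..K^d}. \<forall>k i. \<bar>w l (js s) k i - wb l (js s) k i\<bar> \<le> N"
  shows "x \<in> Rd d \<Longrightarrow> \<forall>i\<in>{1..d}. a i \<le> x i \<and> x i \<le> b i \<Longrightarrow>
      \<forall>j\<in>{0..K}. \<forall>i\<in>{1..d}. \<delta> \<le> \<bar>x i - (a i + real j * (b i - a i) / real K)\<bar> \<Longrightarrow>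
      \<bar>net d r L Kn wb x - m x\<bar> \<le> CLip * real d * width + real (K^d) * M * exp (- N)"
    and "\<delta> \<le> width \<Longrightarrow> \<bar>net d r L Kn wb x\<bar> \<le> M * (3 ^ d + real (K^d) * exp (- N))"
proof -
  have neuron: "cell_neuron d r L N \<delta> w wb (js k) (lo k) (hi k)" if k: "k \<in> {1..K^d}" for k
  proof
    show "\<forall>j\<in>{1..d}. - N \<le> lo k j \<and> hi k j \<le> N"
      using box_N corners_in_box[OF k] by force
  qed (use d_pos delta_pos delta_le_1 L_ge r_ge N_ge weights perturbation k in auto)
  let ?F = "\<lambda>k. fbar d r wb L (js k) 1 x"
  have net: "net d r L Kn wb x = (\<Sum>k\<in>{1..K^d}. m (lo k) * ?F k)"
    using js output_weights by (rule net_eq_sum)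
  have F_range: "\<forall>k\<in>{1..K^d}. 0 \<le> ?F k \<and> ?F k \<le> 1"
    using fbar_pos_less_one[of L] L_ge by (auto intro: less_imp_le)
  have F_low: "\<forall>k\<in>{1..K^d}. \<not> (\<forall>j\<in>{1..d}. lo k j - \<delta> / 2 < x j \<and> x j < hi k j + \<delta> / 2)
      \<longrightarrow> ?F k \<le> exp (- N)"
    using cell_neuron.output_low[OF neuron] by blast
  show "\<bar>net d r L Kn wb x - m x\<bar> \<le> CLip * real d * width + real (K^d) * M * exp (- N)"
    if "x \<in> Rd d" and "\<forall>i\<in>{1..d}. a i \<le> x i \<and> x i \<le> b i"
      and "\<forall>j\<in>{0..K}. \<forall>i\<in>{1..d}. \<delta> \<le> \<bar>x i - (a i + real j * (b i - a i) / real K)\<bar>"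
    unfolding net using m_bounded m_Lip that F_range _ F_low
  proof (rule approximation_off_grid_lines)
    show "\<forall>k\<in>{1..K^d}. (\<forall>j\<in>{1..d}. lo k j + 3 * \<delta> / 4 \<le> x j \<and> x j \<le> hi k j - 3 * \<delta> / 4)
        \<longrightarrow> 1 - exp (- N) \<le> ?F k"
      using cell_neuron.output_high[OF neuron] by blast
  qed
  have "0 \<le> M"
    using m_bounded[rule_format, of "\<lambda>_. 0"] by (force simp: Rd_def)
  then show "\<bar>net d r L Kn wb x\<bar> \<le> M * (3 ^ d + real (K^d) * exp (- N))" if "\<delta> \<le> width"
    unfolding net using that m_bounded lo_in_Rd F_range F_low
    by (intro bounded_output) auto
qed

end

lemma cell_network_approximation:
  fixes m :: "(nat \<Rightarrow> real) \<Rightarrow> real" and c :: real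
  assumes d_pos: "1 \<le> d" and c: "real d \<le> c" "M \<le> c"
    and m_bdd: "bdd_above ((\<lambda>x. \<bar>m x\<bar>) ` Rd d)" and m_sup: "supnorm_d d m = M"
    and m_Lip: "\<forall>x\<in>Rd d. \<forall>y\<in>Rd d. \<bar>m x - m y\<bar> \<le> CLip * dist_d d x y"
    and delta: "0 < \<delta>" "\<delta> \<le> 1" and alpha_le: "\<alpha> \<le> ln (real n)"
    and L_ge: "2 \<le> L" and r_ge: "2 * d \<le> r" and n_ge: "exp (real r + 1) \<le> real n" and K_pos: "1 \<le> K"
    and box: "\<forall>i\<in>{1..d}. a i \<in> {-\<alpha>..\<alpha>} \<and> b i \<in> {-\<alpha>..\<alpha>} \<and> b i - a i = \<Delta>" and Delta_pos: "0 < \<Delta>"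
  shows "\<exists>(alphas :: nat \<Rightarrow> real) (u :: nat \<Rightarrow> nat \<Rightarrow> real) (v :: nat \<Rightarrow> nat \<Rightarrow> real).
      (\<forall>k\<in>{1..K^d}. alphas k \<in> {-M..M} \<and> u k \<in> Rd d \<and> v k \<in> Rd d \<and>
         (\<forall>j\<in>{1..d}. a j \<le> u k j \<and> u k j < b j \<and> a j \<le> v k j \<and> v k j < b j)) \<and>
      (\<forall>(js :: nat \<Rightarrow> nat) (w :: weights) (wb :: weights).
        inj_on js {1..K^d} \<and> js ` {1..K^d} \<subseteq> {1..Kn} \<and>
        (\<forall>k\<in>{1..K^d}. cell_weights d L (ln (real n)) \<delta> w (js k) (u k) (v k)) \<and>
        (\<forall>k\<in>{1..K^d}. wb L 1 1 (js k) = alphas k) \<and>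
        (\<forall>k. k \<notin> js ` {1..K^d} \<longrightarrow> wb L 1 1 k = 0) \<and>
        (\<forall>l\<in>{0..L-1}. \<forall>s\<in>{1..K^d}. \<forall>k i. \<bar>w l (js s) k i - wb l (js s) k i\<bar> \<le> ln (real n))
        \<longrightarrow>
        (\<forall>x\<in>Rd d.
           (\<forall>i\<in>{1..d}. a i \<le> x i \<and> x i \<le> b i) \<and>
           (\<forall>j\<in>{0..K}. \<forall>i\<in>{1..d}. \<bar>x i - (a i + real j * (b i - a i) / real K)\<bar> \<ge> \<delta>)
           \<longrightarrow> \<bar>net d r L Kn wb x - m x\<bar> \<le> c * (CLip * \<Delta> / real K + real (K ^ d) * (1 / real n))) \<and>
        (\<delta> \<le> \<Delta> / real K \<longrightarrow>
           (\<forall>x\<in>Rd d. \<bar>net d r L Kn wb x\<bar> \<le> M * (3 ^ d + real (K ^ d) / real n))))"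
proof -
  interpret cell_grid d K a b \<Delta> \<delta>
    using d_pos K_pos delta Delta_pos box by unfold_locales auto
  have n_pos: "0 < real n"
    using n_ge exp_gt_zero[of "real r + 1"] by linarith
  have N_ge: "real r + 1 \<le> ln (real n)"
    using n_ge n_pos by (simp add: ln_ge_iff)
  have exp_N: "exp (- ln (real n)) = 1 / real n"
    using n_pos by (simp add: exp_minus inverse_eq_divide)
  have m_bounded: "\<forall>y\<in>Rd d. \<bar>m y\<bar> \<le> M"
    using abs_le_supnorm_d[OF m_bdd] m_sup by blast
  have box_N: "\<forall>j\<in>{1..d}. - ln (real n) \<le> a j \<and> b j \<le> ln (real n)"
    using box alpha_le by force
  have "real d * (CLip * width) \<le> c * (CLip * width)"
    using c(1) Lipschitz_const_nonneg[OF d_pos m_Lip] width_pos by (intro mult_right_mono) auto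
  moreover have "M * (real (K^d) * exp (- ln (real n))) \<le> c * (real (K^d) * exp (- ln (real n)))"
    using c(2) by (intro mult_right_mono) auto
  ultimately have error: "CLip * real d * width + real (K^d) * M * exp (- ln (real n))
      \<le> c * (CLip * \<Delta> / real K + real (K ^ d) * (1 / real n))"
    by (simp add: width_def exp_N algebra_simps)
  have network: "(\<forall>x\<in>Rd d.
           (\<forall>i\<in>{1..d}. a i \<le> x i \<and> x i \<le> b i) \<and>
           (\<forall>j\<in>{0..K}. \<forall>i\<in>{1..d}. \<bar>x i - (a i + real j * (b i - a i) / real K)\<bar> \<ge> \<delta>)
           \<longrightarrow> \<bar>net d r L Kn wb x - m x\<bar> \<le> c * (CLip * \<Delta> / real K + real (K ^ d) * (1 / real n))) \<and>
        (\<delta> \<le> \<Delta> / real K \<longrightarrow>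
           (\<forall>x\<in>Rd d. \<bar>net d r L Kn wb x\<bar> \<le> M * (3 ^ d + real (K ^ d) / real n)))"
    if "inj_on js {1..K^d}" "js ` {1..K^d} \<subseteq> {1..Kn}"
      "\<forall>k\<in>{1..K^d}. cell_weights d L (ln (real n)) \<delta> w (js k) (lo k) (hi k)"
      "\<forall>k\<in>{1..K^d}. wb L 1 1 (js k) = m (lo k)" "\<forall>k. k \<notin> js ` {1..K^d} \<longrightarrow> wb L 1 1 k = 0"
      "\<forall>l\<in>{0..L-1}. \<forall>s\<in>{1..K^d}. \<forall>k i. \<bar>w l (js s) k i - wb l (js s) k i\<bar> \<le> ln (real n)"
    for js w wb
  proof (intro conjI ballI impI)
    note bounds = cell_network_bounds[OF m_bounded m_Lip delta(2) L_ge r_ge N_ge box_N that]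
    show "\<bar>net d r L Kn wb x - m x\<bar> \<le> c * (CLip * \<Delta> / real K + real (K ^ d) * (1 / real n))"
      if "x \<in> Rd d" and "(\<forall>i\<in>{1..d}. a i \<le> x i \<and> x i \<le> b i) \<and>
        (\<forall>j\<in>{0..K}. \<forall>i\<in>{1..d}. \<delta> \<le> \<bar>x i - (a i + real j * (b i - a i) / real K)\<bar>)" for x
      using bounds(1)[of x] that error by auto
    show "\<bar>net d r L Kn wb x\<bar> \<le> M * (3 ^ d + real (K ^ d) / real n)"
      if "\<delta> \<le> \<Delta> / real K" for x
      using bounds(2)[of x] that by (simp add: width_def exp_N)
  qed
  show ?thesis
  proof (rule exI[of _ "\<lambda>k. m (lo k)"], rule exI[of _ lo], rule exI[of _ hi], intro conjI ballI)
    show "m (lo k) \<in> {-M..M}" for k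
      using m_bounded lo_in_Rd[of k] by (force simp: abs_le_iff)
    show "lo k \<in> Rd d" "hi k \<in> Rd d" for k
      by (fact lo_in_Rd hi_in_Rd)+
    show "a j \<le> lo k j" "lo k j < b j" "a j \<le> hi k j" "hi k j < b j"
      if "k \<in> {1..K^d}" "j \<in> {1..d}" for k j
      using corners_in_box[OF that] by auto
  qed (intro allI impI, elim conjE, rule network, assumption+)
qed

theorem lemma6:
  fixes d :: nat and M :: real
  assumes "d \<ge> 1"
  shows "\<exists>c19 > 0. \<forall>(m :: (nat \<Rightarrow> real) \<Rightarrow> real) (CLip :: real)
      (\<delta> :: real) (\<alpha> :: real) (L :: nat) (r :: nat) (n :: nat) (K :: nat) (Kn :: nat)
      (a :: nat \<Rightarrow> real) (b :: nat \<Rightarrow> real) (\<Delta> :: real).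
    bdd_above ((\<lambda>x. \<bar>m x\<bar>) ` Rd d) \<and> supnorm_d d m = M \<and>
    (\<forall>x\<in>Rd d. \<forall>y\<in>Rd d. \<bar>m x - m y\<bar> \<le> CLip * dist_d d x y) \<and>
    0 < \<delta> \<and> \<delta> \<le> 1 \<and> 1 \<le> \<alpha> \<and> \<alpha> \<le> ln (real n) \<and>
    L \<ge> 2 \<and> r \<ge> 2 * d \<and> n \<ge> 8 * d \<and> real n \<ge> exp (real r + 1) \<and>
    K \<ge> 1 \<and> K ^ d \<le> Kn \<and>
    (\<forall>i\<in>{1..d}. a i \<in> {-\<alpha>..\<alpha>} \<and> b i \<in> {-\<alpha>..\<alpha>} \<and> b i - a i = \<Delta>) \<and> \<Delta> > 0
    \<longrightarrow>
    (\<exists>(alphas :: nat \<Rightarrow> real) (u :: nat \<Rightarrow> nat \<Rightarrow> real) (v :: nat \<Rightarrow> nat \<Rightarrow> real).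
      (\<forall>k\<in>{1..K^d}. alphas k \<in> {-M..M} \<and> u k \<in> Rd d \<and> v k \<in> Rd d \<and>
         (\<forall>j\<in>{1..d}. a j \<le> u k j \<and> u k j < b j \<and> a j \<le> v k j \<and> v k j < b j)) \<and>
      (\<forall>(js :: nat \<Rightarrow> nat) (w :: nat \<Rightarrow> nat \<Rightarrow> nat \<Rightarrow> nat \<Rightarrow> real)
          (wb :: nat \<Rightarrow> nat \<Rightarrow> nat \<Rightarrow> nat \<Rightarrow> real).
        inj_on js {1..K^d} \<and> js ` {1..K^d} \<subseteq> {1..Kn} \<and>
        (\<forall>k\<in>{1..K^d}.
          (\<forall>j\<in>{1..d}.
             w 0 (js k) j j = 4 * d * (ln (real n))^2 / \<delta> \<and>
             w 0 (js k) j 0 = - (4 * d * (ln (real n))^2 * u k j / \<delta>) \<and>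
             w 0 (js k) (j + d) j = - (4 * d * (ln (real n))^2 / \<delta>) \<and>
             w 0 (js k) (j + d) 0 = 4 * d * (ln (real n))^2 * v k j / \<delta>) \<and>
          (\<forall>s t. s \<le> 2 * d \<and> s \<noteq> t \<and> s \<noteq> t + d \<and> t > 0 \<longrightarrow> w 0 (js k) s t = 0) \<and>
          (\<forall>t\<in>{1..2*d}. w 1 (js k) 1 t = 8 * (ln (real n))^2) \<and>
          w 1 (js k) 1 0 = - 8 * (ln (real n))^2 * (2 * d - 1/2) \<and>
          (\<forall>t > 2 * d. w 1 (js k) 1 t = 0) \<and>
          (\<forall>l\<in>{2..L}. w l (js k) 1 1 = 6 * (ln (real n))^2 \<and>
              w l (js k) 1 0 = - 3 * (ln (real n))^2 \<and>
              (\<forall>t > 1. w l (js k) 1 t = 0))) \<and>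
        (\<forall>k\<in>{1..K^d}. wb L 1 1 (js k) = alphas k) \<and>
        (\<forall>k. k \<notin> js ` {1..K^d} \<longrightarrow> wb L 1 1 k = 0) \<and>
        (\<forall>l\<in>{0..L-1}. \<forall>s\<in>{1..K^d}. \<forall>k i. \<bar>w l (js s) k i - wb l (js s) k i\<bar> \<le> ln (real n))
        \<longrightarrow>
        (\<forall>x\<in>Rd d.
           (\<forall>i\<in>{1..d}. a i \<le> x i \<and> x i \<le> b i) \<and>
           (\<forall>j\<in>{0..K}. \<forall>i\<in>{1..d}. \<bar>x i - (a i + real j * (b i - a i) / real K)\<bar> \<ge> \<delta>)
           \<longrightarrow> \<bar>net d r L Kn wb x - m x\<bar>
                 \<le> c19 * (CLip * \<Delta> / real K + real (K ^ d) * (1 / real n))) \<and>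
        (\<delta> \<le> \<Delta> / real K \<longrightarrow>
           (\<forall>x\<in>Rd d. \<bar>net d r L Kn wb x\<bar> \<le> M * (3 ^ d + real (K ^ d) / real n)))))"
proof (intro exI[of _ "real d + \<bar>M\<bar> + 1"] conjI allI impI)
  show "0 < real d + \<bar>M\<bar> + 1"
    by simp
qed (elim conjE,
    rule cell_network_approximation[OF assms, unfolded cell_weights_def]; (assumption | simp))

end
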